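(* Let $\omega^{(1)}=(2,2,1)$, $\omega^{(2)}=(2,4)$, $\omega^{(3)}=(4,1,1)$, $\omega^{(4)}=(4,3)$, $\omega^{(5)}=(6,2)$. Then for $j=1,2,3,4,5$ respectively: $\dim(QP^{\otimes7}_{10})^{>0}(\omega^{(j)})=0,0,0,20,35$; $\dim(QP^{\otimes8}_{10})^{>0}(\omega^{(j)})=0,0,0,0,20$; and $\dim(QP^{\otimes h}_{10})^{>0}(\omega^{(j)})=0$ for all $j$ whenever $h\ge9$.
   Context: $P^{\otimes h}=\mathbb F_2[t_1,\dots,t_h]$ ($\deg t_i=1$) with the standard action of the mod 2 Steenrod algebra $\mathcal A$ ($\overline{\mathcal A}$ its positive-degree part). The weight vector of $t=t_1^{a_1}\cdots t_h^{a_h}$ is $\omega(t)$ with $\omega_i(t)=\sum_j\alpha_{i-1}(a_j)$, $\alpha_k(a)$ the $k$-th binary digit; weight vectors are ordered left-lexicographically. $(P^{\otimes h})^{>0}$ is the $\mathcal A$-submodule spanned by monomials with all exponents positive. For a weight vector $\omega$ of degree $n$, $(P^{\otimes h}_n)^{>0}(\omega)$ (resp. $(<\omega)$) is spanned by degree-$n$ monomials of $(P^{\otimes h})^{>0}$ with $\omega(t)\le\omega$ (resp. $<\omega$), and $(QP^{\otimes h}_n)^{>0}(\omega)$ is the quotient of $(P^{\otimes h}_n)^{>0}(\omega)$ by $(\overline{\mathcal A}(P^{\otimes h})^{>0}\cap(P^{\otimes h}_n)^{>0}(\omega))+(P^{\otimes h}_n)^{>0}(<\omega)$. *)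

theory Defs
  imports Main
begin

text \<open>Polynomials of P^{\<otimes>h} = F_2[t_1,...,t_h]: a monomial t_1^{a_1}...t_h^{a_h}
  is its exponent list [a_1,...,a_h]; a polynomial over F_2 is the (finite) set of
  monomials occurring with coefficient 1.  Addition is symmetric difference.\<close>

type_synonym mono = "nat list"
type_synonym poly = "mono set"

definition xorsum :: "('b \<Rightarrow> poly) \<Rightarrow> 'b set \<Rightarrow> poly" where
  "xorsum f S = {x. odd (card {m \<in> S. x \<in> f m})}"

definition F2span :: "poly set \<Rightarrow> poly set" where
  "F2span G = {xorsum id F | F. finite F \<and> F \<subseteq> G}"

text \<open>Sq^k on a monomial (Cartan formula, Sq^k(t^a) = binom(a,k) t^(a+k)).\<close>
definition sq_mono :: "nat \<Rightarrow> mono \<Rightarrow> poly" where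
  "sq_mono k a = {b. length b = length a \<and> (\<forall>j<length a. a ! j \<le> b ! j)
      \<and> sum_list b = sum_list a + k
      \<and> (\<forall>j<length a. odd ((a ! j) choose (b ! j - a ! j)))}"

definition Sq :: "nat \<Rightarrow> poly \<Rightarrow> poly" where
  "Sq k p = xorsum (sq_mono k) p"

fun Sqs :: "nat list \<Rightarrow> poly \<Rightarrow> poly" where
  "Sqs [] p = p"
| "Sqs (i # is) p = Sq i (Sqs is p)"

definition posmono :: "nat \<Rightarrow> mono set" where
  "posmono h = {a. length a = h \<and> (\<forall>x\<in>set a. 0 < x)}"

definition Ppos :: "nat \<Rightarrow> poly set" where
  "Ppos h = F2span {{a} | a. a \<in> posmono h}"

text \<open>\<overline>A (P^{\<otimes>h})^{>0}: \<overline>A is spanned by the products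
  Sq^{i_1}...Sq^{i_k} with k \<ge> 1 and all i_j > 0 (A is generated by the Sq^i).\<close>
definition hitPpos :: "nat \<Rightarrow> poly set" where
  "hitPpos h = F2span {Sqs is x | is x. is \<noteq> [] \<and> (\<forall>i\<in>set is. 0 < i) \<and> x \<in> Ppos h}"

text \<open>Weight vector: component i (0-based, i.e. \<omega>_{i+1}) is \<Sum>_j \<alpha>_i(a_j).\<close>
definition weight :: "mono \<Rightarrow> nat \<Rightarrow> nat" where
  "weight a i = (\<Sum>x\<leftarrow>a. (x div 2 ^ i) mod 2)"

definition wvec :: "nat list \<Rightarrow> nat \<Rightarrow> nat" where
  "wvec w i = (if i < length w then w ! i else 0)"

definition wless :: "(nat \<Rightarrow> nat) \<Rightarrow> (nat \<Rightarrow> nat) \<Rightarrow> bool" where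
  "wless u v = (\<exists>k. (\<forall>i<k. u i = v i) \<and> u k < v k)"

definition wle :: "(nat \<Rightarrow> nat) \<Rightarrow> (nat \<Rightarrow> nat) \<Rightarrow> bool" where
  "wle u v = (u = v \<or> wless u v)"

definition Pw :: "nat \<Rightarrow> nat \<Rightarrow> nat list \<Rightarrow> poly set" where
  "Pw h n w = F2span {{a} | a. a \<in> posmono h \<and> sum_list a = n \<and> wle (weight a) (wvec w)}"

definition Pwlt :: "nat \<Rightarrow> nat \<Rightarrow> nat list \<Rightarrow> poly set" where
  "Pwlt h n w = F2span {{a} | a. a \<in> posmono h \<and> sum_list a = n \<and> wless (weight a) (wvec w)}"

definition Rel :: "nat \<Rightarrow> nat \<Rightarrow> nat list \<Rightarrow> poly set" where
  "Rel h n w = {(x - y) \<union> (y - x) | x y. x \<in> hitPpos h \<inter> Pw h n w \<and> y \<in> Pwlt h n w}"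

text \<open>dim (QP^{\<otimes>h}_n)^{>0}(\<omega>) = dimension of Pw / Rel, i.e. the least number of
  elements of Pw which together with Rel span Pw.\<close>
definition QPdim :: "nat \<Rightarrow> nat \<Rightarrow> nat list \<Rightarrow> nat" where
  "QPdim h n w = (LEAST d. \<exists>B. finite B \<and> card B = d \<and> B \<subseteq> Pw h n w
                              \<and> F2span (B \<union> Rel h n w) = Pw h n w)"

end

theory Submission
  imports Defs "HOL-Library.List_Lexorder"
begin

(* Each dimension is read off from a finite certificate that is checked by evaluation.
   For the upper bound, a list E of admissible monomials is given together with, for every
   other admissible monomial, an explicit expression of it as a sum of squares Sq^k(m) (k > 0),
   monomials of smaller weight and members of E.  For the lower bound, every e in E comes with
   a set C_e of monomials of degree n meeting E exactly in e, such that the parity of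
   |C_e \<inter> p| vanishes on every Sq^k(m) with k > 0 and on every monomial of smaller weight.
   These parity functionals vanish on the subspace divided out and are dual to E, so E stays
   linearly independent in the quotient.  For h \<ge> 9 nothing needs to be computed: a monomial
   of degree 10 with all exponents positive in h variables has omega_1 \<ge> 2h - 10 > 6, so no
   monomial has weight at most omega. *)

section \<open>Linear algebra over F_2 on sets of monomials\<close>

lemma odd_card_sym_diff:
  assumes "finite p" "finite q"
  shows "odd (card (sym_diff p q)) \<longleftrightarrow> odd (card p) \<noteq> odd (card q)"
proof -
  have "card (sym_diff p q) = card (p - q) + card (q - p)"
    using assms by (intro card_Un_disjoint) auto
  moreover have "card p = card (p \<inter> q) + card (p - q)" "card q = card (q \<inter> p) + card (q - p)"
    using assms by (simp_all add: card_Int_Diff)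
  ultimately show ?thesis by (auto simp: Int_commute)
qed

lemma odd_card_Int_sym_diff:
  assumes "finite K"
  shows "odd (card (K \<inter> sym_diff p q)) \<longleftrightarrow> odd (card (K \<inter> p)) \<noteq> odd (card (K \<inter> q))"
proof -
  have "K \<inter> sym_diff p q = sym_diff (K \<inter> p) (K \<inter> q)" by auto
  then show ?thesis using assms by (simp add: odd_card_sym_diff)
qed

lemma xorsum_sym_diff:
  assumes "finite F" "finite G"
  shows "xorsum f (sym_diff F G) = sym_diff (xorsum f F) (xorsum f G)"
proof -
  have "{m \<in> sym_diff F G. x \<in> f m} = sym_diff {m \<in> F. x \<in> f m} {m \<in> G. x \<in> f m}" for x
    by auto
  then show ?thesis using assms by (auto simp: xorsum_def odd_card_sym_diff)
qed

lemma xorsum_singleton [simp]: "xorsum f {m} = f m"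
proof -
  have "{m' \<in> {m}. x \<in> f m'} = (if x \<in> f m then {m} else {})" for x by auto
  then show ?thesis by (auto simp: xorsum_def)
qed

lemma xorsum_insert:
  assumes "finite S" "m \<notin> S"
  shows "xorsum f (insert m S) = sym_diff (xorsum f S) (f m)"
proof -
  have "insert m S = sym_diff S {m}" using assms(2) by auto
  then show ?thesis using assms(1) by (simp add: xorsum_sym_diff)
qed

definition F2_subspace :: "poly set \<Rightarrow> bool" where
  "F2_subspace S \<longleftrightarrow> {} \<in> S \<and> (\<forall>p\<in>S. \<forall>q\<in>S. sym_diff p q \<in> S)"

lemma xorsum_in_subspace:
  assumes "F2_subspace S" "finite F" "\<forall>m\<in>F. f m \<in> S"
  shows "xorsum f F \<in> S"
  using assms(2,3)
proof (induction F rule: finite_induct)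
  case empty
  then show ?case using assms(1) by (simp add: xorsum_def F2_subspace_def)
next
  case (insert m F)
  then show ?case using assms(1) by (simp add: xorsum_insert F2_subspace_def)
qed

lemma foldr_sym_diff_in_subspace:
  assumes "F2_subspace S" "set ps \<subseteq> S"
  shows "foldr sym_diff ps {} \<in> S"
  using assms(2) by (induction ps) (use assms(1) in \<open>auto simp: F2_subspace_def\<close>)

lemma F2span_least: "F2_subspace S \<Longrightarrow> G \<subseteq> S \<Longrightarrow> F2span G \<subseteq> S"
  unfolding F2span_def by (auto intro!: xorsum_in_subspace)

lemma F2_subspace_F2span: "F2_subspace (F2span G)"
proof -
  have "{} = xorsum id {}" by (simp add: xorsum_def)
  moreover have "sym_diff (xorsum id F) (xorsum id F') = xorsum id (sym_diff F F')"
    if "finite F" "finite F'" for F F' :: "poly set"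
    using that by (simp add: xorsum_sym_diff)
  ultimately show ?thesis unfolding F2_subspace_def F2span_def by blast
qed

lemma F2span_sym_diff: "p \<in> F2span G \<Longrightarrow> q \<in> F2span G \<Longrightarrow> sym_diff p q \<in> F2span G"
  using F2_subspace_F2span unfolding F2_subspace_def by blast

lemma empty_in_F2span: "{} \<in> F2span G"
  using F2_subspace_F2span unfolding F2_subspace_def by blast

lemma F2span_superset: "G \<subseteq> F2span G"
proof
  fix q assume "q \<in> G"
  then have "xorsum id {q} \<in> F2span G" unfolding F2span_def by blast
  then show "q \<in> F2span G" by simp
qed

lemma F2span_mono: "G \<subseteq> H \<Longrightarrow> F2span G \<subseteq> F2span H"
  unfolding F2span_def by blast

lemma F2span_singletons: "F2span {{a} | a. P a} = {X. finite X \<and> (\<forall>a\<in>X. P a)}"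
proof
  have "F2_subspace {X. finite X \<and> (\<forall>a\<in>X. P a)}" unfolding F2_subspace_def by auto
  then show "F2span {{a} | a. P a} \<subseteq> {X. finite X \<and> (\<forall>a\<in>X. P a)}"
    by (rule F2span_least) auto
next
  show "{X. finite X \<and> (\<forall>a\<in>X. P a)} \<subseteq> F2span {{a} | a. P a}"
  proof
    fix X assume X: "X \<in> {X. finite X \<and> (\<forall>a\<in>X. P a)}"
    have "{m \<in> (\<lambda>a. {a}) ` X. x \<in> m} = (if x \<in> X then {{x}} else {})" for x by auto
    then have "X = xorsum id ((\<lambda>a. {a}) ` X)" by (auto simp: xorsum_def)
    then show "X \<in> F2span {{a} | a. P a}" using X unfolding F2span_def by blast
  qed
qed

lemma card_F2span_le:
  assumes "finite G"
  shows "finite (F2span G) \<and> card (F2span G) \<le> 2 ^ card G"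
proof -
  have span: "F2span G = xorsum id ` Pow G"
    unfolding F2span_def using assms by (auto intro: finite_subset)
  have "card (xorsum id ` Pow G) \<le> card (Pow G)" using assms by (intro card_image_le) simp
  then show ?thesis unfolding span using assms by (simp add: card_Pow)
qed

lemma F2_subspace_even_card_Int:
  assumes "finite K"
  shows "F2_subspace {p. even (card (K \<inter> p))}"
proof -
  have "even (card (K \<inter> sym_diff p q))" if "even (card (K \<inter> p))" "even (card (K \<inter> q))" for p q
    using that odd_card_Int_sym_diff[OF assms, of p q] by blast
  then show ?thesis unfolding F2_subspace_def by simp
qed

section \<open>Dimension of a quotient via dual parity functionals\<close>

lemma card_le_card_spanning_by_duality:
  fixes E :: "mono set" and C :: "mono \<Rightarrow> mono set"
  assumes "finite E" and fin_C: "\<forall>e\<in>E. finite (C e)"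
    and dual: "\<forall>e\<in>E. \<forall>e'\<in>E. e' \<in> C e \<longleftrightarrow> e' = e"
    and annihilated: "\<forall>r\<in>R. \<forall>e\<in>E. even (card (C e \<inter> r))"
    and "finite B" and spans: "{{e} | e. e \<in> E} \<subseteq> F2span (B \<union> R)"
  shows "card E \<le> card B"
proof -
  define \<phi> where "\<phi> p = {e \<in> E. odd (card (C e \<inter> p))}" for p
  have \<phi>_sym_diff: "\<phi> (sym_diff p q) = sym_diff (\<phi> p) (\<phi> q)" for p q
  proof -
    have "odd (card (C e \<inter> sym_diff p q)) \<longleftrightarrow> odd (card (C e \<inter> p)) \<noteq> odd (card (C e \<inter> q))"
      if "e \<in> E" for e
      using that fin_C by (intro odd_card_Int_sym_diff) auto
    then show ?thesis unfolding \<phi>_def by auto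
  qed
  have \<phi>_R: "\<phi> r = {}" if "r \<in> R" for r using annihilated that by (auto simp: \<phi>_def)
  define T where "T = F2span (\<phi> ` B)"
  have "F2_subspace {p. \<phi> p \<in> T}"
    unfolding F2_subspace_def T_def using \<phi>_sym_diff F2span_sym_diff empty_in_F2span
    by (simp add: \<phi>_def)
  moreover have "B \<union> R \<subseteq> {p. \<phi> p \<in> T}"
  proof
    fix p assume "p \<in> B \<union> R"
    then show "p \<in> {p. \<phi> p \<in> T}"
      using \<phi>_R F2span_superset[of "\<phi> ` B"] empty_in_F2span unfolding T_def by auto
  qed
  ultimately have "F2span (B \<union> R) \<subseteq> {p. \<phi> p \<in> T}" by (rule F2span_least)
  moreover have "F2span {{e} | e. e \<in> E} \<subseteq> F2span (B \<union> R)"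
    using spans by (rule F2span_least[OF F2_subspace_F2span])
  ultimately have span_E: "F2span {{e} | e. e \<in> E} \<subseteq> {p. \<phi> p \<in> T}" by blast
  have "\<phi> X \<in> T" if "X \<subseteq> E" for X
  proof -
    have "X \<in> F2span {{e} | e. e \<in> E}"
      using that \<open>finite E\<close> finite_subset unfolding F2span_singletons by auto
    then show ?thesis using span_E by blast
  qed
  moreover have "\<phi> X = X" if "X \<subseteq> E" for X
  proof -
    have "C e \<inter> X = (if e \<in> X then {e} else {})" if "e \<in> E" for e
      using dual that \<open>X \<subseteq> E\<close> by auto
    then show ?thesis using that unfolding \<phi>_def by (auto split: if_splits)
  qed
  ultimately have "Pow E \<subseteq> T" by auto
  moreover have "finite T" and card_T: "card T \<le> 2 ^ card (\<phi> ` B)"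
    using card_F2span_le[of "\<phi> ` B"] \<open>finite B\<close> unfolding T_def by auto
  ultimately have "card (Pow E) \<le> card T" by (intro card_mono)
  then have "(2::nat) ^ card E \<le> 2 ^ card (\<phi> ` B)"
    using card_T card_Pow[OF \<open>finite E\<close>] by linarith
  then have "card E \<le> card (\<phi> ` B)" by simp
  also have "\<dots> \<le> card B" using \<open>finite B\<close> by (rule card_image_le)
  finally show ?thesis .
qed

definition admissible_mono :: "nat \<Rightarrow> nat \<Rightarrow> nat list \<Rightarrow> mono \<Rightarrow> bool" where
  "admissible_mono h n w a \<longleftrightarrow> a \<in> posmono h \<and> sum_list a = n \<and> wle (weight a) (wvec w)"

definition lower_mono :: "nat \<Rightarrow> nat \<Rightarrow> nat list \<Rightarrow> mono \<Rightarrow> bool" where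
  "lower_mono h n w a \<longleftrightarrow> a \<in> posmono h \<and> sum_list a = n \<and> wless (weight a) (wvec w)"

lemma Pw_eq_F2span: "Pw h n w = F2span {{a} | a. admissible_mono h n w a}"
  by (simp add: Pw_def admissible_mono_def)

lemma Pw_eq: "Pw h n w = {X. finite X \<and> (\<forall>a\<in>X. admissible_mono h n w a)}"
  unfolding Pw_eq_F2span by (rule F2span_singletons)

lemma Pwlt_eq: "Pwlt h n w = {X. finite X \<and> (\<forall>a\<in>X. lower_mono h n w a)}"
  unfolding Pwlt_def lower_mono_def by (rule F2span_singletons)

lemma Ppos_eq: "Ppos h = {p. finite p \<and> p \<subseteq> posmono h}"
  unfolding Ppos_def F2span_singletons by blast

lemma lower_mono_imp_admissible: "lower_mono h n w a \<Longrightarrow> admissible_mono h n w a"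
  by (simp add: lower_mono_def admissible_mono_def wle_def)

lemma Rel_subset_Pw: "Rel h n w \<subseteq> Pw h n w"
proof
  fix r assume "r \<in> Rel h n w"
  then obtain x y where "r = sym_diff x y" "x \<in> Pw h n w" "y \<in> Pwlt h n w"
    unfolding Rel_def by blast
  then show "r \<in> Pw h n w" unfolding Pw_eq Pwlt_eq
    using lower_mono_imp_admissible by auto
qed

lemma lower_mono_in_Rel:
  assumes "lower_mono h n w a"
  shows "{a} \<in> Rel h n w"
proof -
  have "{} \<in> hitPpos h \<inter> Pw h n w" "{a} \<in> Pwlt h n w"
    using assms by (auto simp: hitPpos_def empty_in_F2span Pw_eq Pwlt_eq)
  then have "sym_diff {} {a} \<in> Rel h n w" unfolding Rel_def by blast
  then show ?thesis by simp
qed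

lemma QPdim_eqI:
  assumes "finite E" and fin_C: "\<forall>e\<in>E. finite (C e)"
    and dual: "\<forall>e\<in>E. \<forall>e'\<in>E. e' \<in> C e \<longleftrightarrow> e' = e"
    and annihilated: "\<forall>r\<in>Rel h n w. \<forall>e\<in>E. even (card (C e \<inter> r))"
    and basis: "\<forall>e\<in>E. admissible_mono h n w e"
    and spans: "Pw h n w \<subseteq> F2span ({{e} | e. e \<in> E} \<union> Rel h n w)"
  shows "QPdim h n w = card E"
  unfolding QPdim_def
proof (rule Least_equality)
  let ?B = "{{e} | e. e \<in> E}"
  have B_eq: "?B = (\<lambda>e. {e}) ` E" by blast
  have "?B \<subseteq> Pw h n w" using basis by (auto simp: Pw_eq)
  then have "F2span (?B \<union> Rel h n w) \<subseteq> Pw h n w"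
    using Rel_subset_Pw unfolding Pw_def by (intro F2span_least F2_subspace_F2span) auto
  then have "F2span (?B \<union> Rel h n w) = Pw h n w" using spans by blast
  moreover have "card ?B = card E" unfolding B_eq by (simp add: card_image)
  ultimately show "\<exists>B. finite B \<and> card B = card E \<and> B \<subseteq> Pw h n w \<and> F2span (B \<union> Rel h n w) = Pw h n w"
    using \<open>finite E\<close> \<open>?B \<subseteq> Pw h n w\<close> B_eq by (metis finite_imageI)
next
  fix d assume "\<exists>B. finite B \<and> card B = d \<and> B \<subseteq> Pw h n w \<and> F2span (B \<union> Rel h n w) = Pw h n w"
  then obtain B where "finite B" "card B = d" "F2span (B \<union> Rel h n w) = Pw h n w" by blast
  moreover have "{{e} | e. e \<in> E} \<subseteq> Pw h n w" using basis by (auto simp: Pw_eq)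
  ultimately show "card E \<le> d"
    using card_le_card_spanning_by_duality[OF \<open>finite E\<close> fin_C dual annihilated] by auto
qed

lemma QPdim_eq_0:
  assumes "\<forall>a. \<not> admissible_mono h n w a"
  shows "QPdim h n w = 0"
proof -
  have "Pw h n w = {{}}" using assms unfolding Pw_eq by auto
  then have "QPdim h n w = card ({} :: mono set)"
    by (intro QPdim_eqI) (auto intro: empty_in_F2span)
  then show ?thesis by simp
qed

lemma twice_length_le_weight_0: "\<forall>x\<in>set a. 0 < x \<Longrightarrow> 2 * length a \<le> sum_list a + weight a 0"
proof (induction a)
  case (Cons x a)
  then have "2 \<le> x + x mod 2" by (cases "x = 1") auto
  then show ?case using Cons by (simp add: weight_def)
qed (simp add: weight_def)

lemma not_wle_if_first_greater: "v 0 < u 0 \<Longrightarrow> \<not> wle u v"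
  unfolding wle_def wless_def by (metis less_asym' less_nat_zero_code neq0_conv)

lemma QPdim_eq_0_if_many_variables:
  assumes "n + wvec w 0 < 2 * h"
  shows "QPdim h n w = 0"
proof (rule QPdim_eq_0, intro allI notI)
  fix a assume "admissible_mono h n w a"
  then have "2 * h \<le> n + weight a 0" "wle (weight a) (wvec w)"
    using twice_length_le_weight_0[of a] by (auto simp: admissible_mono_def posmono_def)
  then show False using assms not_wle_if_first_greater[of "wvec w" "weight a"] by linarith
qed

section \<open>Steenrod squares on monomials\<close>

lemma sq_mono_list_all2:
  "sq_mono k a = {b. list_all2 (\<lambda>x y. x \<le> y \<and> odd (x choose (y - x))) a b \<and> sum_list b = sum_list a + k}"
  by (auto simp: sq_mono_def list_all2_conv_all_nth)

lemma finite_sq_mono: "finite (sq_mono k a)"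
proof (rule finite_subset)
  show "sq_mono k a \<subseteq> {b. set b \<subseteq> {..sum_list a + k} \<and> length b = length a}"
    using member_le_sum_list by (fastforce simp: sq_mono_def)
qed (rule finite_lists_length_eq, simp)

lemma sq_mono_subset_posmono:
  assumes "a \<in> posmono h"
  shows "sq_mono k a \<subseteq> posmono h"
proof
  fix b assume "b \<in> sq_mono k a"
  then have "length b = length a" "\<forall>j<length a. a ! j \<le> b ! j" by (auto simp: sq_mono_def)
  moreover have "\<forall>j<length a. 0 < a ! j" using assms by (auto simp: posmono_def)
  ultimately show "b \<in> posmono h" using assms by (fastforce simp: posmono_def in_set_conv_nth)
qed

lemma Sq_in_Ppos: "p \<in> Ppos h \<Longrightarrow> Sq i p \<in> Ppos h"
proof -
  have "F2_subspace (Ppos h)" unfolding Ppos_def by (rule F2_subspace_F2span)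
  moreover assume "p \<in> Ppos h"
  ultimately show ?thesis
    unfolding Sq_def using finite_sq_mono sq_mono_subset_posmono
    by (intro xorsum_in_subspace) (auto simp: Ppos_eq, meson subsetD)
qed

lemma hitPpos_subset:
  assumes S: "F2_subspace S" and sq: "\<And>a i. a \<in> posmono h \<Longrightarrow> 0 < i \<Longrightarrow> sq_mono i a \<in> S"
  shows "hitPpos h \<subseteq> S"
  unfolding hitPpos_def
proof (rule F2span_least[OF S], safe)
  fix "is" :: "nat list" and x
  assume "is \<noteq> []" "\<forall>i\<in>set is. 0 < i" and x: "x \<in> Ppos h"
  then obtain i js where is_eq: "is = i # js" and "0 < i" by (cases "is") auto
  have "Sqs js x \<in> Ppos h" using x by (induction js) (auto intro: Sq_in_Ppos)
  then have "finite (Sqs js x)" "Sqs js x \<subseteq> posmono h" by (auto simp: Ppos_eq)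
  then show "Sqs is x \<in> S"
    unfolding is_eq using \<open>0 < i\<close> by (auto simp: Sq_def intro!: xorsum_in_subspace[OF S] sq)
qed

lemma sq_mono_in_hitPpos:
  assumes "m \<in> posmono h" "0 < k"
  shows "sq_mono k m \<in> hitPpos h"
proof -
  have "Sqs [k] {m} \<in> hitPpos h"
    unfolding hitPpos_def using assms
    by (intro subsetD[OF F2span_superset] CollectI exI[of _ "[k]"] exI[of _ "{m}"]) (simp add: Ppos_eq)
  then show ?thesis by (simp add: Sq_def)
qed

lemma Rel_annihilated:
  assumes "finite K"
    and squares: "\<And>a i. a \<in> posmono h \<Longrightarrow> 0 < i \<Longrightarrow> even (card (K \<inter> sq_mono i a))"
    and no_lower: "\<forall>a\<in>K. \<not> lower_mono h n w a"
  shows "\<forall>r\<in>Rel h n w. even (card (K \<inter> r))"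
proof -
  let ?S = "{p. even (card (K \<inter> p))}"
  have S: "F2_subspace ?S" using \<open>finite K\<close> by (rule F2_subspace_even_card_Int)
  have "hitPpos h \<subseteq> ?S" using S squares by (intro hitPpos_subset) auto
  moreover have "Pwlt h n w \<subseteq> ?S"
  proof
    fix y assume "y \<in> Pwlt h n w"
    then have "K \<inter> y = {}" using no_lower by (auto simp: Pwlt_eq)
    then show "y \<in> ?S" by simp
  qed
  ultimately show ?thesis using S unfolding Rel_def F2_subspace_def by blast
qed

section \<open>Executable counterparts\<close>

fun sq_list :: "nat \<Rightarrow> mono \<Rightarrow> mono list" where
  "sq_list k [] = (if k = 0 then [[]] else [])"
| "sq_list k (x # xs) = concat (map (\<lambda>j. if odd (x choose j)
      then map (Cons (x + j)) (sq_list (k - j) xs) else []) [0..<Suc k])"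

lemma sum_list_le_if_list_all2:
  "list_all2 (\<lambda>x y. x \<le> y \<and> P x y) xs ys \<Longrightarrow> sum_list xs \<le> (sum_list ys :: nat)"
  by (induction rule: list_all2_induct) auto

lemma set_sq_list: "set (sq_list k a) = sq_mono k a"
proof (induction a arbitrary: k)
  case Nil
  then show ?case by (auto simp: sq_mono_def)
next
  case (Cons x xs)
  let ?P = "\<lambda>x y. x \<le> y \<and> odd (x choose (y - x))"
  have sq_mono_Cons: "b \<in> sq_mono k (x # xs) \<longleftrightarrow>
      (\<exists>j bs. j \<le> k \<and> odd (x choose j) \<and> b = (x + j) # bs \<and> bs \<in> sq_mono (k - j) xs)" for b
  proof
    assume "b \<in> sq_mono k (x # xs)"
    then obtain y bs where "b = y # bs" "?P x y" "list_all2 ?P xs bs"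
        "y + sum_list bs = x + sum_list xs + k"
      by (auto simp: sq_mono_list_all2 list_all2_Cons1)
    moreover have "sum_list xs \<le> sum_list bs"
      using \<open>list_all2 ?P xs bs\<close> by (rule sum_list_le_if_list_all2)
    ultimately show "\<exists>j bs. j \<le> k \<and> odd (x choose j) \<and> b = (x + j) # bs \<and> bs \<in> sq_mono (k - j) xs"
      by (intro exI[of _ "y - x"] exI[of _ bs]) (auto simp: sq_mono_list_all2)
  qed (auto simp: sq_mono_list_all2 list_all2_Cons1)
  show ?case
  proof (intro set_eqI iffI)
    fix b assume "b \<in> set (sq_list k (x # xs))"
    then show "b \<in> sq_mono k (x # xs)" unfolding sq_mono_Cons using Cons.IH by (auto simp del: upt_Suc)
  next
    fix b assume "b \<in> sq_mono k (x # xs)"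
    then obtain j bs where "j \<le> k" "odd (x choose j)" "b = (x + j) # bs" "bs \<in> sq_mono (k - j) xs"
      unfolding sq_mono_Cons by blast
    then show "b \<in> set (sq_list k (x # xs))" using Cons.IH by (auto simp del: upt_Suc intro!: bexI[of _ j])
  qed
qed

lemma sorted_wrt_concat_map_upt:
  assumes "\<And>j. j < m \<Longrightarrow> sorted_wrt R (f j)"
    and "\<And>i j u v. i < j \<Longrightarrow> j < m \<Longrightarrow> u \<in> set (f i) \<Longrightarrow> v \<in> set (f j) \<Longrightarrow> R u v"
  shows "sorted_wrt R (concat (map f [0..<m]))"
  using assms by (induction m) (auto simp: sorted_wrt_append)

lemma sorted_sq_list: "sorted_wrt (<) (sq_list k a)"
proof (induction a arbitrary: k)
  case (Cons x xs)
  show ?case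
    unfolding sq_list.simps
  proof (rule sorted_wrt_concat_map_upt)
    show "sorted_wrt (<) (if odd (x choose j) then map (Cons (x + j)) (sq_list (k - j) xs) else [])" for j
      using Cons.IH by (auto simp: sorted_wrt_map)
  qed (auto split: if_splits)
qed simp

fun compositions :: "nat \<Rightarrow> nat \<Rightarrow> mono list" where
  "compositions 0 d = (if d = 0 then [[]] else [])"
| "compositions (Suc h) d = concat (map (\<lambda>x. map (Cons x) (compositions h (d - x))) [1..<Suc d])"

lemma set_compositions: "set (compositions h d) = {a \<in> posmono h. sum_list a = d}"
proof (induction h arbitrary: d)
  case 0
  then show ?case by (auto simp: posmono_def)
next
  case (Suc h)
  show ?case
  proof (intro set_eqI iffI)
    fix a assume "a \<in> set (compositions (Suc h) d)"
    then show "a \<in> {a \<in> posmono (Suc h). sum_list a = d}"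
      using Suc.IH by (auto simp: posmono_def simp del: upt_Suc)
  next
    fix a assume "a \<in> {a \<in> posmono (Suc h). sum_list a = d}"
    then obtain x as where "a = x # as" "0 < x" "as \<in> posmono h" "x + sum_list as = d"
      by (auto simp: posmono_def length_Suc_conv)
    then show "a \<in> set (compositions (Suc h) d)"
      using Suc.IH by (auto simp del: upt_Suc intro!: bexI[of _ x])
  qed
qed

lemma weight_eq_0: "sum_list a \<le> i \<Longrightarrow> weight a i = 0"
proof -
  assume "sum_list a \<le> i"
  then have "x < 2 ^ i" if "x \<in> set a" for x
    using that member_le_sum_list[of x a] less_exp[of i] by linarith
  then show "weight a i = 0" by (simp add: weight_def sum_list_eq_0_iff)
qed

lemma
  assumes "\<forall>i\<ge>N. u i = 0" "\<forall>i\<ge>N. v i = 0"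
  shows wless_iff_less_map: "wless u v \<longleftrightarrow> map u [0..<N] < map v [0..<N]"
    and wle_iff_le_map: "wle u v \<longleftrightarrow> map u [0..<N] \<le> map v [0..<N]"
proof -
  have bound: "u k < v k \<Longrightarrow> k < N" for k using assms by (metis less_nat_zero_code not_le)
  show less: "wless u v \<longleftrightarrow> map u [0..<N] < map v [0..<N]"
  proof
    assume "wless u v"
    then obtain k where k: "\<forall>i<k. u i = v i" "u k < v k" unfolding wless_def by blast
    then have "k < N" using bound by blast
    then show "map u [0..<N] < map v [0..<N]"
      unfolding list_less_def lexord_take_index_conv using k
      by (intro disjI2 exI[of _ k]) (simp add: take_map)
  next
    assume "map u [0..<N] < map v [0..<N]"
    then obtain k where "k < N" "map u [0..<k] = map v [0..<k]" "u k < v k"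
      unfolding list_less_def lexord_take_index_conv by (auto simp: take_map)
    then show "wless u v" unfolding wless_def by (intro exI[of _ k]) auto
  qed
  have "u = v \<longleftrightarrow> map u [0..<N] = map v [0..<N]" using assms by (auto intro!: ext)
  then show "wle u v \<longleftrightarrow> map u [0..<N] \<le> map v [0..<N]"
    unfolding wle_def list_le_def less by blast
qed

definition admissible_list :: "nat \<Rightarrow> nat \<Rightarrow> nat list \<Rightarrow> mono list" where
  "admissible_list h n w =
     filter (\<lambda>a. map (weight a) [0..<n] \<le> map (wvec w) [0..<n]) (compositions h n)"

definition lower_list :: "nat \<Rightarrow> nat \<Rightarrow> nat list \<Rightarrow> mono list" where
  "lower_list h n w =
     filter (\<lambda>a. map (weight a) [0..<n] < map (wvec w) [0..<n]) (compositions h n)"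

lemma
  assumes "length w \<le> n" "sum_list a = n"
  shows wle_weight_iff: "wle (weight a) (wvec w) \<longleftrightarrow> map (weight a) [0..<n] \<le> map (wvec w) [0..<n]"
    and wless_weight_iff: "wless (weight a) (wvec w) \<longleftrightarrow> map (weight a) [0..<n] < map (wvec w) [0..<n]"
proof -
  have "\<forall>i\<ge>n. weight a i = 0" "\<forall>i\<ge>n. wvec w i = 0"
    using assms weight_eq_0 by (auto simp: wvec_def)
  then show "wle (weight a) (wvec w) \<longleftrightarrow> map (weight a) [0..<n] \<le> map (wvec w) [0..<n]"
    and "wless (weight a) (wvec w) \<longleftrightarrow> map (weight a) [0..<n] < map (wvec w) [0..<n]"
    by (simp_all add: wle_iff_le_map wless_iff_less_map)
qed

lemma
  assumes "length w \<le> n"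
  shows set_admissible_list: "set (admissible_list h n w) = {a. admissible_mono h n w a}"
    and set_lower_list: "set (lower_list h n w) = {a. lower_mono h n w a}"
  using assms
  by (auto simp: admissible_list_def lower_list_def admissible_mono_def lower_mono_def
      set_compositions wle_weight_iff wless_weight_iff)

fun merge_sym_diff :: "'a::linorder list \<Rightarrow> 'a list \<Rightarrow> 'a list" where
  "merge_sym_diff [] ys = ys"
| "merge_sym_diff xs [] = xs"
| "merge_sym_diff (x # xs) (y # ys) =
     (if x = y then merge_sym_diff xs ys
      else if x < y then x # merge_sym_diff xs (y # ys)
      else y # merge_sym_diff (x # xs) ys)"

lemma merge_sym_diff_correct:
  "sorted_wrt (<) xs \<Longrightarrow> sorted_wrt (<) ys \<Longrightarrow>
   sorted_wrt (<) (merge_sym_diff xs ys) \<and> set (merge_sym_diff xs ys) = sym_diff (set xs) (set ys)"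
  by (induction xs ys rule: merge_sym_diff.induct) (auto dest: less_trans)

fun count_common :: "'a::linorder list \<Rightarrow> 'a list \<Rightarrow> nat" where
  "count_common [] ys = 0"
| "count_common xs [] = 0"
| "count_common (x # xs) (y # ys) =
     (if x = y then Suc (count_common xs ys)
      else if x < y then count_common xs (y # ys)
      else count_common (x # xs) ys)"

lemma count_common_eq_card:
  "sorted_wrt (<) xs \<Longrightarrow> sorted_wrt (<) ys \<Longrightarrow> count_common xs ys = card (set xs \<inter> set ys)"
proof (induction xs ys rule: count_common.induct)
  case (3 x xs y ys)
  consider "x = y" | "x < y" | "y < x" by fastforce
  then show ?case
  proof cases
    case 1
    then have "set (x # xs) \<inter> set (y # ys) = insert x (set xs \<inter> set ys)" "x \<notin> set xs"
      using "3.prems" by auto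
    then show ?thesis using 1 3 by simp
  next
    case 2
    then have "set (x # xs) \<inter> set (y # ys) = set xs \<inter> set (y # ys)" using "3.prems" by auto
    then show ?thesis using 2 3 by simp
  next
    case 3
    then have "set (x # xs) \<inter> set (y # ys) = set (x # xs) \<inter> set ys" using "3.prems" by auto
    then show ?thesis using 3 "3.IH" "3.prems" by simp
  qed
qed auto

definition xor_sorted :: "'a::linorder list list \<Rightarrow> 'a list" where
  "xor_sorted Ls = foldr merge_sym_diff Ls []"

lemma xor_sorted_correct:
  "\<forall>L\<in>set Ls. sorted_wrt (<) L \<Longrightarrow>
   sorted_wrt (<) (xor_sorted Ls) \<and> set (xor_sorted Ls) = foldr sym_diff (map set Ls) {}"
  by (induction Ls) (simp_all add: xor_sorted_def merge_sym_diff_correct)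

section \<open>Certificates\<close>

(* An entry (e, c) of a dual table is a basis monomial e with the support c of its parity
   functional.  A relation (a, ps, ys, bs) asserts
   a = \<Sum>(k, m) \<in> ps. Sq^k(m) + \<Sum>ys + \<Sum>bs, with ys of smaller weight and bs in the basis. *)
type_synonym dual_table = "(mono \<times> mono list) list"
type_synonym relation = "mono \<times> (nat \<times> mono) list \<times> mono list \<times> mono list"

definition duals_ok :: "nat \<Rightarrow> mono list \<Rightarrow> mono list \<Rightarrow> dual_table \<Rightarrow> bool" where
  "duals_ok n A L tab \<longleftrightarrow> distinct (map fst tab) \<and>
     list_all (\<lambda>(e, c). e \<in> set A \<and> successively (<) c
       \<and> list_all (\<lambda>x. sum_list x = n \<and> x \<notin> set L) c
       \<and> list_all (\<lambda>e'. e' \<in> set c \<longleftrightarrow> e' = e) (map fst tab)) tab"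

definition annihilates :: "dual_table \<Rightarrow> mono list \<Rightarrow> bool" where
  "annihilates tab S \<longleftrightarrow> list_all (\<lambda>(e, c). even (count_common c S)) tab"

definition squares_annihilated :: "nat \<Rightarrow> nat \<Rightarrow> dual_table \<Rightarrow> bool" where
  "squares_annihilated h n tab \<longleftrightarrow> list_all (annihilates tab)
     (map (\<lambda>a. sq_list (n - sum_list a) a) (concat (map (compositions h) [0..<n])))"

definition relation_sum_ok :: "mono list \<Rightarrow> mono \<Rightarrow> mono list \<Rightarrow> mono list \<Rightarrow> mono list \<Rightarrow> bool" where
  "relation_sum_ok A a ys bs X \<longleftrightarrow> list_all (\<lambda>x. x \<in> set A) X \<and> xor_sorted [X, ys, bs] = [a]"

fun relation_ok :: "nat \<Rightarrow> mono list \<Rightarrow> mono list \<Rightarrow> mono list \<Rightarrow> relation \<Rightarrow> bool" where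
  "relation_ok h A L E (a, ps, ys, bs) \<longleftrightarrow>
     list_all (\<lambda>(k, m). 0 < k \<and> length m = h \<and> list_all ((<) 0) m) ps \<and>
     successively (<) ys \<and> list_all (\<lambda>y. y \<in> set L) ys \<and>
     successively (<) bs \<and> list_all (\<lambda>b. b \<in> set E) bs \<and>
     relation_sum_ok A a ys bs (xor_sorted (map (\<lambda>(k, m). sq_list k m) ps))"

definition certificate_ok_for ::
    "nat \<Rightarrow> nat \<Rightarrow> mono list \<Rightarrow> mono list \<Rightarrow> dual_table \<Rightarrow> relation list \<Rightarrow> bool" where
  "certificate_ok_for h n A L tab rels \<longleftrightarrow>
     duals_ok n A L tab \<and> squares_annihilated h n tab \<and>
     list_all (\<lambda>a. a \<in> set (map fst tab) \<or> a \<in> set L \<or> a \<in> set (map fst rels)) A \<and>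
     list_all (relation_ok h A L (map fst tab)) rels"

(* Passing the candidate lists as arguments makes evaluation compute them only once. *)
definition certificate_ok :: "nat \<Rightarrow> nat \<Rightarrow> nat list \<Rightarrow> dual_table \<Rightarrow> relation list \<Rightarrow> bool" where
  "certificate_ok h n w tab rels \<longleftrightarrow>
     certificate_ok_for h n (admissible_list h n w) (lower_list h n w) tab rels"

lemma duals_okD:
  assumes "duals_ok n A L tab" "(e, c) \<in> set tab"
  shows "the (map_of tab e) = c" "e \<in> set A" "sorted_wrt (<) c"
    "\<forall>x\<in>set c. sum_list x = n \<and> x \<notin> set L" "\<forall>e'\<in>fst ` set tab. e' \<in> set c \<longleftrightarrow> e' = e"
proof -
  have "distinct (map fst tab)" using assms(1) by (simp add: duals_ok_def)
  moreover have "e \<in> set A \<and> successively (<) c \<and> (\<forall>x\<in>set c. sum_list x = n \<and> x \<notin> set L)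
      \<and> (\<forall>e'\<in>set (map fst tab). e' \<in> set c \<longleftrightarrow> e' = e)"
    using assms unfolding duals_ok_def list_all_iff by fastforce
  ultimately show "the (map_of tab e) = c" "e \<in> set A" "sorted_wrt (<) c"
    "\<forall>x\<in>set c. sum_list x = n \<and> x \<notin> set L" "\<forall>e'\<in>fst ` set tab. e' \<in> set c \<longleftrightarrow> e' = e"
    using assms(2) by (auto simp: map_of_is_SomeI successively_conv_sorted_wrt)
qed

lemma squares_annihilatedD:
  assumes "squares_annihilated h n tab" "(e, c) \<in> set tab"
    and "sorted_wrt (<) c" "\<forall>x\<in>set c. sum_list x = n"
    and "a \<in> posmono h" "0 < i"
  shows "even (card (set c \<inter> sq_mono i a))"
proof (cases "sum_list a + i = n")
  case True
  then have "a \<in> set (concat (map (compositions h) [0..<n]))" "n - sum_list a = i"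
    using assms(5,6) by (auto simp: set_compositions)
  then have "even (count_common c (sq_list i a))"
    using assms(1,2) unfolding squares_annihilated_def annihilates_def list_all_iff by fastforce
  then show ?thesis using count_common_eq_card[OF assms(3) sorted_sq_list] by (simp add: set_sq_list)
next
  case False
  then have "set c \<inter> sq_mono i a = {}" using assms(4) by (auto simp: sq_mono_def)
  then show ?thesis by simp
qed

lemma relation_okD:
  assumes "relation_ok h A L E (a, ps, ys, bs)"
    and A: "\<forall>x\<in>set A. admissible_mono h n w x" and L: "\<forall>y\<in>set L. lower_mono h n w y"
  shows "{a} \<in> F2span ({{e} | e. e \<in> set E} \<union> Rel h n w)"
proof -
  define X where "X = xor_sorted (map (\<lambda>(k, m). sq_list k m) ps)"
  have sorted: "sorted_wrt (<) X" "sorted_wrt (<) ys" "sorted_wrt (<) bs"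
    and X_set: "set X = foldr sym_diff (map (\<lambda>(k, m). sq_mono k m) ps) {}"
    using assms(1) xor_sorted_correct[of "map (\<lambda>(k, m). sq_list k m) ps"]
    by (auto simp: X_def sorted_sq_list successively_conv_sorted_wrt set_sq_list o_def case_prod_unfold)
  have "set X \<in> hitPpos h"
    unfolding X_set using assms(1)
    by (intro foldr_sym_diff_in_subspace)
       (auto simp: hitPpos_def F2_subspace_F2span list_all_iff posmono_def
             intro!: sq_mono_in_hitPpos[unfolded hitPpos_def])
  moreover have "set X \<in> Pw h n w" "set ys \<in> Pwlt h n w"
    using assms by (auto simp: Pw_eq Pwlt_eq X_def relation_sum_ok_def list_all_iff)
  ultimately have "sym_diff (set X) (set ys) \<in> Rel h n w"
    unfolding Rel_def by blast
  then have Rel_part: "sym_diff (set X) (set ys) \<in> F2span ({{e} | e. e \<in> set E} \<union> Rel h n w)"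
    using F2span_superset by blast
  have "set bs \<in> F2span {{e} | e. e \<in> set E}"
    using assms(1) by (auto simp: F2span_singletons list_all_iff)
  then have basis_part: "set bs \<in> F2span ({{e} | e. e \<in> set E} \<union> Rel h n w)"
    using F2span_mono[of "{{e} | e. e \<in> set E}"] by blast
  have "xor_sorted [X, ys, bs] = [a]"
    using assms(1) by (simp add: X_def relation_sum_ok_def)
  then have "{a} = sym_diff (set X) (sym_diff (set ys) (set bs))"
    using xor_sorted_correct[of "[X, ys, bs]"] sorted by simp
  then have "{a} = sym_diff (sym_diff (set X) (set ys)) (set bs)" by blast
  then show ?thesis using Rel_part basis_part by (simp add: F2span_sym_diff)
qed

lemma duals_annihilate_Rel:
  assumes "duals_ok n A L tab" "squares_annihilated h n tab" "set L = {a. lower_mono h n w a}"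
    and "(e, c) \<in> set tab"
  shows "\<forall>r\<in>Rel h n w. even (card (set c \<inter> r))"
  using squares_annihilatedD[OF assms(2,4)] duals_okD[OF assms(1,4)] assms(3)
  by (intro Rel_annihilated) auto

lemma certificate_spans:
  assumes covered: "\<forall>a\<in>set A. a \<in> fst ` set tab \<or> a \<in> set L \<or> a \<in> fst ` set rels"
    and rels: "\<forall>r\<in>set rels. relation_ok h A L (map fst tab) r"
    and A: "set A = {a. admissible_mono h n w a}" and L: "set L = {a. lower_mono h n w a}"
  shows "Pw h n w \<subseteq> F2span ({{e} | e. e \<in> fst ` set tab} \<union> Rel h n w)"
proof -
  let ?G = "{{e} | e. e \<in> fst ` set tab} \<union> Rel h n w"
  have "{a} \<in> F2span ?G" if "admissible_mono h n w a" for a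
  proof -
    have "a \<in> fst ` set tab \<or> lower_mono h n w a \<or> (\<exists>ps ys bs. (a, ps, ys, bs) \<in> set rels)"
      using covered that A L by fastforce
    then consider "a \<in> fst ` set tab" | "lower_mono h n w a"
      | ps ys bs where "(a, ps, ys, bs) \<in> set rels"
      by blast
    then show ?thesis
    proof cases
      case 1
      then have "{a} \<in> ?G" by blast
      then show ?thesis using F2span_superset[of ?G] by blast
    next
      case 2
      then have "{a} \<in> ?G" using lower_mono_in_Rel by blast
      then show ?thesis using F2span_superset[of ?G] by blast
    next
      case 3
      then have "relation_ok h A L (map fst tab) (a, ps, ys, bs)" using rels by blast
      moreover have "\<forall>x\<in>set A. admissible_mono h n w x" "\<forall>y\<in>set L. lower_mono h n w y"
        using A L by auto
      ultimately have "{a} \<in> F2span ({{e} | e. e \<in> set (map fst tab)} \<union> Rel h n w)"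
        by (rule relation_okD)
      then show ?thesis by simp
    qed
  qed
  then show ?thesis unfolding Pw_eq_F2span by (intro F2span_least F2_subspace_F2span) blast
qed

theorem QPdim_certified:
  assumes cert: "certificate_ok h n w tab rels" and "length w \<le> n"
  shows "QPdim h n w = length tab"
proof -
  define A where "A = admissible_list h n w"
  define L where "L = lower_list h n w"
  have A: "set A = {a. admissible_mono h n w a}" and L: "set L = {a. lower_mono h n w a}"
    using \<open>length w \<le> n\<close> by (simp_all add: A_def L_def set_admissible_list set_lower_list)
  have duals: "duals_ok n A L tab" and squares: "squares_annihilated h n tab"
    and covered: "\<forall>a\<in>set A. a \<in> fst ` set tab \<or> a \<in> set L \<or> a \<in> fst ` set rels"
    and rels: "\<forall>r\<in>set rels. relation_ok h A L (map fst tab) r"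
    using cert by (auto simp: certificate_ok_def certificate_ok_for_def A_def L_def list_all_iff)
  let ?C = "\<lambda>e. set (the (map_of tab e))"
  have "QPdim h n w = card (fst ` set tab)"
  proof (rule QPdim_eqI)
    show "\<forall>e\<in>fst ` set tab. \<forall>e'\<in>fst ` set tab. e' \<in> ?C e \<longleftrightarrow> e' = e"
      using duals_okD(1,5)[OF duals] by fastforce
    show "\<forall>r\<in>Rel h n w. \<forall>e\<in>fst ` set tab. even (card (?C e \<inter> r))"
      using duals_annihilate_Rel[OF duals squares L] duals_okD(1)[OF duals] by fastforce
    show "\<forall>e\<in>fst ` set tab. admissible_mono h n w e"
      using duals_okD(2)[OF duals] A by auto
    show "Pw h n w \<subseteq> F2span ({{e} | e. e \<in> fst ` set tab} \<union> Rel h n w)"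
      using covered rels A L by (rule certificate_spans)
  qed simp_all
  also have "card (fst ` set tab) = length tab"
    using duals distinct_card[of "map fst tab"] by (simp add: duals_ok_def)
  finally show ?thesis .
qed

lemma QPdim_eq_0_if_admissible_list_Nil:
  assumes "admissible_list h n w = []" "length w \<le> n"
  shows "QPdim h n w = 0"
  using assms set_admissible_list[of w n h] by (intro QPdim_eq_0) auto

lemma QPdim_10_eq_0:
  "QPdim 7 10 [2,2,1] = 0" "QPdim 7 10 [2,4] = 0" "QPdim 7 10 [4,1,1] = 0"
  "QPdim 8 10 [2,2,1] = 0" "QPdim 8 10 [2,4] = 0" "QPdim 8 10 [4,1,1] = 0" "QPdim 8 10 [4,3] = 0"
  by (rule QPdim_eq_0_if_admissible_list_Nil; code_simp)+

definition duals_7_43 :: dual_table where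
  "duals_7_43 = [([1,1,1,1,2,2,2], [[1,1,1,1,1,1,4], [1,1,1,1,1,4,1], [1,1,1,1,2,2,2], [1,1,1,1,4,1,1], [2,1,1,1,1,1,3], [2,1,1,1,1,2,2], [2,1,1,1,1,3,1], [2,1,1,1,2,1,2], [2,1,1,1,2,2,1], [2,1,1,1,3,1,1], [3,2,1,1,1,1,1], [4,1,1,1,1,1,1]]),
    ([1,1,1,2,1,2,2], [[1,1,1,1,1,1,4], [1,1,1,1,1,4,1], [1,1,1,2,1,2,2], [1,1,1,4,1,1,1], [2,1,1,1,1,1,3], [2,1,1,1,1,2,2], [2,1,1,1,1,3,1], [2,1,1,2,1,1,2], [2,1,1,2,1,2,1], [2,1,1,3,1,1,1], [3,2,1,1,1,1,1], [4,1,1,1,1,1,1]]),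
    ([1,1,1,2,2,1,2], [[1,1,1,1,1,1,4], [1,1,1,1,4,1,1], [1,1,1,2,2,1,2], [1,1,1,4,1,1,1], [2,1,1,1,1,1,3], [2,1,1,1,2,1,2], [2,1,1,1,3,1,1], [2,1,1,2,1,1,2], [2,1,1,2,2,1,1], [2,1,1,3,1,1,1], [3,2,1,1,1,1,1], [4,1,1,1,1,1,1]]),
    ([1,1,1,2,2,2,1], [[1,1,1,1,1,4,1], [1,1,1,1,4,1,1], [1,1,1,2,2,2,1], [1,1,1,4,1,1,1], [2,1,1,1,1,3,1], [2,1,1,1,2,2,1], [2,1,1,1,3,1,1], [2,1,1,2,1,2,1], [2,1,1,2,2,1,1], [2,1,1,3,1,1,1], [3,2,1,1,1,1,1], [4,1,1,1,1,1,1]]),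
    ([1,1,2,1,1,2,2], [[1,1,1,1,1,1,4], [1,1,1,1,1,4,1], [1,1,2,1,1,2,2], [1,1,4,1,1,1,1], [2,1,1,1,1,1,3], [2,1,1,1,1,2,2], [2,1,1,1,1,3,1], [2,1,2,1,1,1,2], [2,1,2,1,1,2,1], [2,1,3,1,1,1,1], [3,2,1,1,1,1,1], [4,1,1,1,1,1,1]]),
    ([1,1,2,1,2,1,2], [[1,1,1,1,1,1,4], [1,1,1,1,4,1,1], [1,1,2,1,2,1,2], [1,1,4,1,1,1,1], [2,1,1,1,1,1,3], [2,1,1,1,2,1,2], [2,1,1,1,3,1,1], [2,1,2,1,1,1,2], [2,1,2,1,2,1,1], [2,1,3,1,1,1,1], [3,2,1,1,1,1,1], [4,1,1,1,1,1,1]]),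
    ([1,1,2,1,2,2,1], [[1,1,1,1,1,4,1], [1,1,1,1,4,1,1], [1,1,2,1,2,2,1], [1,1,4,1,1,1,1], [2,1,1,1,1,3,1], [2,1,1,1,2,2,1], [2,1,1,1,3,1,1], [2,1,2,1,1,2,1], [2,1,2,1,2,1,1], [2,1,3,1,1,1,1], [3,2,1,1,1,1,1], [4,1,1,1,1,1,1]]),
    ([1,1,2,2,1,1,2], [[1,1,1,1,1,1,4], [1,1,1,4,1,1,1], [1,1,2,2,1,1,2], [1,1,4,1,1,1,1], [2,1,1,1,1,1,3], [2,1,1,2,1,1,2], [2,1,1,3,1,1,1], [2,1,2,1,1,1,2], [2,1,2,2,1,1,1], [2,1,3,1,1,1,1], [3,2,1,1,1,1,1], [4,1,1,1,1,1,1]]),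
    ([1,1,2,2,1,2,1], [[1,1,1,1,1,4,1], [1,1,1,4,1,1,1], [1,1,2,2,1,2,1], [1,1,4,1,1,1,1], [2,1,1,1,1,3,1], [2,1,1,2,1,2,1], [2,1,1,3,1,1,1], [2,1,2,1,1,2,1], [2,1,2,2,1,1,1], [2,1,3,1,1,1,1], [3,2,1,1,1,1,1], [4,1,1,1,1,1,1]]),
    ([1,1,2,2,2,1,1], [[1,1,1,1,4,1,1], [1,1,1,4,1,1,1], [1,1,2,2,2,1,1], [1,1,4,1,1,1,1], [2,1,1,1,3,1,1], [2,1,1,2,2,1,1], [2,1,1,3,1,1,1], [2,1,2,1,2,1,1], [2,1,2,2,1,1,1], [2,1,3,1,1,1,1], [3,2,1,1,1,1,1], [4,1,1,1,1,1,1]]),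
    ([1,2,1,1,1,2,2], [[1,1,1,1,1,1,4], [1,1,1,1,1,4,1], [1,2,1,1,1,2,2], [1,4,1,1,1,1,1], [2,1,1,1,1,1,3], [2,1,1,1,1,2,2], [2,1,1,1,1,3,1], [2,2,1,1,1,1,2], [2,2,1,1,1,2,1], [2,3,1,1,1,1,1], [3,2,1,1,1,1,1], [4,1,1,1,1,1,1]]),
    ([1,2,1,1,2,1,2], [[1,1,1,1,1,1,4], [1,1,1,1,4,1,1], [1,2,1,1,2,1,2], [1,4,1,1,1,1,1], [2,1,1,1,1,1,3], [2,1,1,1,2,1,2], [2,1,1,1,3,1,1], [2,2,1,1,1,1,2], [2,2,1,1,2,1,1], [2,3,1,1,1,1,1], [3,2,1,1,1,1,1], [4,1,1,1,1,1,1]]),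
    ([1,2,1,1,2,2,1], [[1,1,1,1,1,4,1], [1,1,1,1,4,1,1], [1,2,1,1,2,2,1], [1,4,1,1,1,1,1], [2,1,1,1,1,3,1], [2,1,1,1,2,2,1], [2,1,1,1,3,1,1], [2,2,1,1,1,2,1], [2,2,1,1,2,1,1], [2,3,1,1,1,1,1], [3,2,1,1,1,1,1], [4,1,1,1,1,1,1]]),
    ([1,2,1,2,1,1,2], [[1,1,1,1,1,1,4], [1,1,1,4,1,1,1], [1,2,1,2,1,1,2], [1,4,1,1,1,1,1], [2,1,1,1,1,1,3], [2,1,1,2,1,1,2], [2,1,1,3,1,1,1], [2,2,1,1,1,1,2], [2,2,1,2,1,1,1], [2,3,1,1,1,1,1], [3,2,1,1,1,1,1], [4,1,1,1,1,1,1]]),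
    ([1,2,1,2,1,2,1], [[1,1,1,1,1,4,1], [1,1,1,4,1,1,1], [1,2,1,2,1,2,1], [1,4,1,1,1,1,1], [2,1,1,1,1,3,1], [2,1,1,2,1,2,1], [2,1,1,3,1,1,1], [2,2,1,1,1,2,1], [2,2,1,2,1,1,1], [2,3,1,1,1,1,1], [3,2,1,1,1,1,1], [4,1,1,1,1,1,1]]),
    ([1,2,1,2,2,1,1], [[1,1,1,1,4,1,1], [1,1,1,4,1,1,1], [1,2,1,2,2,1,1], [1,4,1,1,1,1,1], [2,1,1,1,3,1,1], [2,1,1,2,2,1,1], [2,1,1,3,1,1,1], [2,2,1,1,2,1,1], [2,2,1,2,1,1,1], [2,3,1,1,1,1,1], [3,2,1,1,1,1,1], [4,1,1,1,1,1,1]]),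
    ([1,2,2,1,1,1,2], [[1,1,1,1,1,1,4], [1,1,4,1,1,1,1], [1,2,2,1,1,1,2], [1,4,1,1,1,1,1], [2,1,1,1,1,1,3], [2,1,2,1,1,1,2], [2,1,3,1,1,1,1], [2,2,1,1,1,1,2], [2,2,2,1,1,1,1], [2,3,1,1,1,1,1], [3,2,1,1,1,1,1], [4,1,1,1,1,1,1]]),
    ([1,2,2,1,1,2,1], [[1,1,1,1,1,4,1], [1,1,4,1,1,1,1], [1,2,2,1,1,2,1], [1,4,1,1,1,1,1], [2,1,1,1,1,3,1], [2,1,2,1,1,2,1], [2,1,3,1,1,1,1], [2,2,1,1,1,2,1], [2,2,2,1,1,1,1], [2,3,1,1,1,1,1], [3,2,1,1,1,1,1], [4,1,1,1,1,1,1]]),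
    ([1,2,2,1,2,1,1], [[1,1,1,1,4,1,1], [1,1,4,1,1,1,1], [1,2,2,1,2,1,1], [1,4,1,1,1,1,1], [2,1,1,1,3,1,1], [2,1,2,1,2,1,1], [2,1,3,1,1,1,1], [2,2,1,1,2,1,1], [2,2,2,1,1,1,1], [2,3,1,1,1,1,1], [3,2,1,1,1,1,1], [4,1,1,1,1,1,1]]),
    ([1,2,2,2,1,1,1], [[1,1,1,4,1,1,1], [1,1,4,1,1,1,1], [1,2,2,2,1,1,1], [1,4,1,1,1,1,1], [2,1,1,3,1,1,1], [2,1,2,2,1,1,1], [2,1,3,1,1,1,1], [2,2,1,2,1,1,1], [2,2,2,1,1,1,1], [2,3,1,1,1,1,1], [3,2,1,1,1,1,1], [4,1,1,1,1,1,1]])]"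

definition relations_7_43 :: "relation list" where
  "relations_7_43 = [([2,1,1,1,1,2,2], [(1, [1,1,1,1,1,2,2])], [], [[1,1,1,1,2,2,2], [1,1,1,2,1,2,2], [1,1,2,1,1,2,2], [1,2,1,1,1,2,2]]),
    ([2,1,1,1,2,1,2], [(1, [1,1,1,1,2,1,2])], [], [[1,1,1,1,2,2,2], [1,1,1,2,2,1,2], [1,1,2,1,2,1,2], [1,2,1,1,2,1,2]]),
    ([2,1,1,1,2,2,1], [(1, [1,1,1,1,2,2,1])], [], [[1,1,1,1,2,2,2], [1,1,1,2,2,2,1], [1,1,2,1,2,2,1], [1,2,1,1,2,2,1]]),
    ([2,1,1,2,1,1,2], [(1, [1,1,1,2,1,1,2])], [], [[1,1,1,2,1,2,2], [1,1,1,2,2,1,2], [1,1,2,2,1,1,2], [1,2,1,2,1,1,2]]),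
    ([2,1,1,2,1,2,1], [(1, [1,1,1,2,1,2,1])], [], [[1,1,1,2,1,2,2], [1,1,1,2,2,2,1], [1,1,2,2,1,2,1], [1,2,1,2,1,2,1]]),
    ([2,1,1,2,2,1,1], [(1, [1,1,1,2,2,1,1])], [], [[1,1,1,2,2,1,2], [1,1,1,2,2,2,1], [1,1,2,2,2,1,1], [1,2,1,2,2,1,1]]),
    ([2,1,2,1,1,1,2], [(1, [1,1,2,1,1,1,2])], [], [[1,1,2,1,1,2,2], [1,1,2,1,2,1,2], [1,1,2,2,1,1,2], [1,2,2,1,1,1,2]]),
    ([2,1,2,1,1,2,1], [(1, [1,1,2,1,1,2,1])], [], [[1,1,2,1,1,2,2], [1,1,2,1,2,2,1], [1,1,2,2,1,2,1], [1,2,2,1,1,2,1]]),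
    ([2,1,2,1,2,1,1], [(1, [1,1,2,1,2,1,1])], [], [[1,1,2,1,2,1,2], [1,1,2,1,2,2,1], [1,1,2,2,2,1,1], [1,2,2,1,2,1,1]]),
    ([2,1,2,2,1,1,1], [(1, [1,1,2,2,1,1,1])], [], [[1,1,2,2,1,1,2], [1,1,2,2,1,2,1], [1,1,2,2,2,1,1], [1,2,2,2,1,1,1]]),
    ([2,2,1,1,1,1,2], [(1, [1,2,1,1,1,1,2])], [], [[1,2,1,1,1,2,2], [1,2,1,1,2,1,2], [1,2,1,2,1,1,2], [1,2,2,1,1,1,2]]),
    ([2,2,1,1,1,2,1], [(1, [1,2,1,1,1,2,1])], [], [[1,2,1,1,1,2,2], [1,2,1,1,2,2,1], [1,2,1,2,1,2,1], [1,2,2,1,1,2,1]]),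
    ([2,2,1,1,2,1,1], [(1, [1,2,1,1,2,1,1])], [], [[1,2,1,1,2,1,2], [1,2,1,1,2,2,1], [1,2,1,2,2,1,1], [1,2,2,1,2,1,1]]),
    ([2,2,1,2,1,1,1], [(1, [1,2,1,2,1,1,1])], [], [[1,2,1,2,1,1,2], [1,2,1,2,1,2,1], [1,2,1,2,2,1,1], [1,2,2,2,1,1,1]]),
    ([2,2,2,1,1,1,1], [(3, [1,1,1,1,1,1,1]), (1, [1,1,1,1,1,2,2]), (1, [1,1,1,1,2,1,2]), (1, [1,1,1,1,2,2,1]), (1, [1,1,1,2,1,1,2]), (1, [1,1,1,2,1,2,1]), (1, [1,1,1,2,2,1,1]), (1, [1,1,2,1,1,1,2]), (1, [1,1,2,1,1,2,1]), (1, [1,1,2,1,2,1,1]), (1, [1,1,2,2,1,1,1]), (1, [1,2,1,1,1,1,2]), (1, [1,2,1,1,1,2,1]), (1, [1,2,1,1,2,1,1]), (1, [1,2,1,2,1,1,1])], [], [[1,2,2,1,1,1,2], [1,2,2,1,1,2,1], [1,2,2,1,2,1,1], [1,2,2,2,1,1,1]])]"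

definition duals_7_62 :: dual_table where
  "duals_7_62 = [([1,1,1,1,1,2,3], [[1,1,1,1,1,2,3], [2,1,1,1,1,1,3]]),
    ([1,1,1,1,1,3,2], [[1,1,1,1,1,3,2], [2,1,1,1,1,3,1]]),
    ([1,1,1,1,2,1,3], [[1,1,1,1,2,1,3], [2,1,1,1,1,1,3]]),
    ([1,1,1,1,2,3,1], [[1,1,1,1,2,3,1], [2,1,1,1,1,3,1]]),
    ([1,1,1,1,3,1,2], [[1,1,1,1,3,1,2], [2,1,1,1,3,1,1]]),
    ([1,1,1,1,3,2,1], [[1,1,1,1,3,2,1], [2,1,1,1,3,1,1]]),
    ([1,1,1,2,1,1,3], [[1,1,1,2,1,1,3], [2,1,1,1,1,1,3]]),
    ([1,1,1,2,1,3,1], [[1,1,1,2,1,3,1], [2,1,1,1,1,3,1]]),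
    ([1,1,1,2,3,1,1], [[1,1,1,2,3,1,1], [2,1,1,1,3,1,1]]),
    ([1,1,1,3,1,1,2], [[1,1,1,3,1,1,2], [2,1,1,3,1,1,1]]),
    ([1,1,1,3,1,2,1], [[1,1,1,3,1,2,1], [2,1,1,3,1,1,1]]),
    ([1,1,1,3,2,1,1], [[1,1,1,3,2,1,1], [2,1,1,3,1,1,1]]),
    ([1,1,2,1,1,1,3], [[1,1,2,1,1,1,3], [2,1,1,1,1,1,3]]),
    ([1,1,2,1,1,3,1], [[1,1,2,1,1,3,1], [2,1,1,1,1,3,1]]),
    ([1,1,2,1,3,1,1], [[1,1,2,1,3,1,1], [2,1,1,1,3,1,1]]),
    ([1,1,2,3,1,1,1], [[1,1,2,3,1,1,1], [2,1,1,3,1,1,1]]),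
    ([1,1,3,1,1,1,2], [[1,1,3,1,1,1,2], [2,1,3,1,1,1,1]]),
    ([1,1,3,1,1,2,1], [[1,1,3,1,1,2,1], [2,1,3,1,1,1,1]]),
    ([1,1,3,1,2,1,1], [[1,1,3,1,2,1,1], [2,1,3,1,1,1,1]]),
    ([1,1,3,2,1,1,1], [[1,1,3,2,1,1,1], [2,1,3,1,1,1,1]]),
    ([1,2,1,1,1,1,3], [[1,2,1,1,1,1,3], [2,1,1,1,1,1,3]]),
    ([1,2,1,1,1,3,1], [[1,2,1,1,1,3,1], [2,1,1,1,1,3,1]]),
    ([1,2,1,1,3,1,1], [[1,2,1,1,3,1,1], [2,1,1,1,3,1,1]]),
    ([1,2,1,3,1,1,1], [[1,2,1,3,1,1,1], [2,1,1,3,1,1,1]]),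
    ([1,2,3,1,1,1,1], [[1,2,3,1,1,1,1], [2,1,3,1,1,1,1]]),
    ([1,3,1,1,1,1,2], [[1,3,1,1,1,1,2], [2,3,1,1,1,1,1]]),
    ([1,3,1,1,1,2,1], [[1,3,1,1,1,2,1], [2,3,1,1,1,1,1]]),
    ([1,3,1,1,2,1,1], [[1,3,1,1,2,1,1], [2,3,1,1,1,1,1]]),
    ([1,3,1,2,1,1,1], [[1,3,1,2,1,1,1], [2,3,1,1,1,1,1]]),
    ([1,3,2,1,1,1,1], [[1,3,2,1,1,1,1], [2,3,1,1,1,1,1]]),
    ([3,1,1,1,1,1,2], [[3,1,1,1,1,1,2], [3,2,1,1,1,1,1]]),
    ([3,1,1,1,1,2,1], [[3,1,1,1,1,2,1], [3,2,1,1,1,1,1]]),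
    ([3,1,1,1,2,1,1], [[3,1,1,1,2,1,1], [3,2,1,1,1,1,1]]),
    ([3,1,1,2,1,1,1], [[3,1,1,2,1,1,1], [3,2,1,1,1,1,1]]),
    ([3,1,2,1,1,1,1], [[3,1,2,1,1,1,1], [3,2,1,1,1,1,1]])]"

definition relations_7_62 :: "relation list" where
  "relations_7_62 = [([2,1,1,1,1,1,3], [(1, [1,1,1,1,1,1,3])], [[1,1,1,1,1,1,4]], [[1,1,1,1,1,2,3], [1,1,1,1,2,1,3], [1,1,1,2,1,1,3], [1,1,2,1,1,1,3], [1,2,1,1,1,1,3]]),
    ([2,1,1,1,1,3,1], [(1, [1,1,1,1,1,3,1])], [[1,1,1,1,1,4,1]], [[1,1,1,1,1,3,2], [1,1,1,1,2,3,1], [1,1,1,2,1,3,1], [1,1,2,1,1,3,1], [1,2,1,1,1,3,1]]),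
    ([2,1,1,1,3,1,1], [(1, [1,1,1,1,3,1,1])], [[1,1,1,1,4,1,1]], [[1,1,1,1,3,1,2], [1,1,1,1,3,2,1], [1,1,1,2,3,1,1], [1,1,2,1,3,1,1], [1,2,1,1,3,1,1]]),
    ([2,1,1,3,1,1,1], [(1, [1,1,1,3,1,1,1])], [[1,1,1,4,1,1,1]], [[1,1,1,3,1,1,2], [1,1,1,3,1,2,1], [1,1,1,3,2,1,1], [1,1,2,3,1,1,1], [1,2,1,3,1,1,1]]),
    ([2,1,3,1,1,1,1], [(3, [1,1,1,1,1,1,1]), (2, [1,1,1,1,1,1,2]), (2, [1,1,1,1,1,2,1]), (1, [1,1,1,1,1,2,2]), (2, [1,1,1,1,2,1,1]), (1, [1,1,1,1,2,1,2]), (1, [1,1,1,1,2,2,1]), (2, [1,1,1,2,1,1,1]), (1, [1,1,1,2,1,1,2]), (1, [1,1,1,2,1,2,1]), (1, [1,1,1,2,2,1,1]), (2, [1,1,2,1,1,1,1]), (1, [1,1,2,1,1,1,2]), (1, [1,1,2,1,1,2,1]), (1, [1,1,2,1,2,1,1]), (1, [1,1,2,2,1,1,1]), (1, [1,1,3,1,1,1,1])], [[1,1,1,1,1,1,4], [1,1,1,1,1,4,1], [1,1,1,1,2,2,2], [1,1,1,1,4,1,1], [1,1,1,2,1,2,2], [1,1,1,2,2,1,2], [1,1,1,2,2,2,1], [1,1,1,4,1,1,1], [1,1,2,1,1,2,2], [1,1,2,1,2,1,2], [1,1,2,1,2,2,1], [1,1,2,2,1,1,2], [1,1,2,2,1,2,1],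 [1,1,2,2,2,1,1]], [[1,1,3,1,1,1,2], [1,1,3,1,1,2,1], [1,1,3,1,2,1,1], [1,1,3,2,1,1,1], [1,2,3,1,1,1,1]]),
    ([2,3,1,1,1,1,1], [(3, [1,1,1,1,1,1,1]), (2, [1,1,1,1,1,1,2]), (2, [1,1,1,1,1,2,1]), (1, [1,1,1,1,1,2,2]), (2, [1,1,1,1,2,1,1]), (1, [1,1,1,1,2,1,2]), (1, [1,1,1,1,2,2,1]), (2, [1,1,1,2,1,1,1]), (1, [1,1,1,2,1,1,2]), (1, [1,1,1,2,1,2,1]), (1, [1,1,1,2,2,1,1]), (2, [1,2,1,1,1,1,1]), (1, [1,2,1,1,1,1,2]), (1, [1,2,1,1,1,2,1]), (1, [1,2,1,1,2,1,1]), (1, [1,2,1,2,1,1,1]), (1, [1,3,1,1,1,1,1])], [[1,1,1,1,1,1,4], [1,1,1,1,1,4,1], [1,1,1,1,2,2,2], [1,1,1,1,4,1,1], [1,1,1,2,1,2,2], [1,1,1,2,2,1,2], [1,1,1,2,2,2,1], [1,1,1,4,1,1,1], [1,2,1,1,1,2,2], [1,2,1,1,2,1,2], [1,2,1,1,2,2,1], [1,2,1,2,1,1,2], [1,2,1,2,1,2,1], [1,2,1,2,2,1,1]], [[1,3,1,1,1,1,2], [1,3,1,1,1,2,1], [1,3,1,1,2,1,1], [1,3,1,2,1,1,1], [1,3,2,1,1,1,1]]),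
    ([3,2,1,1,1,1,1], [(3, [1,1,1,1,1,1,1]), (2, [1,1,1,1,1,1,2]), (2, [1,1,1,1,1,2,1]), (2, [1,1,1,1,2,1,1]), (2, [1,1,1,2,1,1,1]), (1, [1,1,2,1,1,1,2]), (1, [1,1,2,1,1,2,1]), (1, [1,1,2,1,2,1,1]), (1, [1,1,2,2,1,1,1]), (1, [1,2,1,1,1,1,2]), (1, [1,2,1,1,1,2,1]), (1, [1,2,1,1,2,1,1]), (1, [1,2,1,2,1,1,1]), (2, [2,1,1,1,1,1,1]), (1, [3,1,1,1,1,1,1])], [[1,1,1,1,1,1,4], [1,1,1,1,1,4,1], [1,1,1,1,4,1,1], [1,1,1,4,1,1,1], [1,1,2,1,1,2,2], [1,1,2,1,2,1,2], [1,1,2,1,2,2,1], [1,1,2,2,1,1,2], [1,1,2,2,1,2,1], [1,1,2,2,2,1,1], [1,2,1,1,1,2,2], [1,2,1,1,2,1,2], [1,2,1,1,2,2,1], [1,2,1,2,1,1,2], [1,2,1,2,1,2,1], [1,2,1,2,2,1,1]], [[3,1,1,1,1,1,2], [3,1,1,1,1,2,1], [3,1,1,1,2,1,1], [3,1,1,2,1,1,1], [3,1,2,1,1,1,1]])]"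

definition duals_8_62 :: dual_table where
  "duals_8_62 = [([1,1,1,1,1,1,2,2], [[1,1,1,1,1,1,2,2], [1,2,2,1,1,1,1,1], [2,1,1,1,1,1,1,2], [2,1,1,1,1,1,2,1], [2,1,2,1,1,1,1,1], [2,2,1,1,1,1,1,1]]),
    ([1,1,1,1,1,2,1,2], [[1,1,1,1,1,2,1,2], [1,2,2,1,1,1,1,1], [2,1,1,1,1,1,1,2], [2,1,1,1,1,2,1,1], [2,1,2,1,1,1,1,1], [2,2,1,1,1,1,1,1]]),
    ([1,1,1,1,1,2,2,1], [[1,1,1,1,1,2,2,1], [1,2,2,1,1,1,1,1], [2,1,1,1,1,1,2,1], [2,1,1,1,1,2,1,1], [2,1,2,1,1,1,1,1], [2,2,1,1,1,1,1,1]]),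
    ([1,1,1,1,2,1,1,2], [[1,1,1,1,2,1,1,2], [1,2,2,1,1,1,1,1], [2,1,1,1,1,1,1,2], [2,1,1,1,2,1,1,1], [2,1,2,1,1,1,1,1], [2,2,1,1,1,1,1,1]]),
    ([1,1,1,1,2,1,2,1], [[1,1,1,1,2,1,2,1], [1,2,2,1,1,1,1,1], [2,1,1,1,1,1,2,1], [2,1,1,1,2,1,1,1], [2,1,2,1,1,1,1,1], [2,2,1,1,1,1,1,1]]),
    ([1,1,1,1,2,2,1,1], [[1,1,1,1,2,2,1,1], [1,2,2,1,1,1,1,1], [2,1,1,1,1,2,1,1], [2,1,1,1,2,1,1,1], [2,1,2,1,1,1,1,1], [2,2,1,1,1,1,1,1]]),
    ([1,1,1,2,1,1,1,2], [[1,1,1,2,1,1,1,2], [1,2,2,1,1,1,1,1], [2,1,1,1,1,1,1,2], [2,1,1,2,1,1,1,1], [2,1,2,1,1,1,1,1], [2,2,1,1,1,1,1,1]]),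
    ([1,1,1,2,1,1,2,1], [[1,1,1,2,1,1,2,1], [1,2,2,1,1,1,1,1], [2,1,1,1,1,1,2,1], [2,1,1,2,1,1,1,1], [2,1,2,1,1,1,1,1], [2,2,1,1,1,1,1,1]]),
    ([1,1,1,2,1,2,1,1], [[1,1,1,2,1,2,1,1], [1,2,2,1,1,1,1,1], [2,1,1,1,1,2,1,1], [2,1,1,2,1,1,1,1], [2,1,2,1,1,1,1,1], [2,2,1,1,1,1,1,1]]),
    ([1,1,1,2,2,1,1,1], [[1,1,1,2,2,1,1,1], [1,2,2,1,1,1,1,1], [2,1,1,1,2,1,1,1], [2,1,1,2,1,1,1,1], [2,1,2,1,1,1,1,1], [2,2,1,1,1,1,1,1]]),
    ([1,1,2,1,1,1,1,2], [[1,1,2,1,1,1,1,2], [1,2,2,1,1,1,1,1], [2,1,1,1,1,1,1,2], [2,2,1,1,1,1,1,1]]),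
    ([1,1,2,1,1,1,2,1], [[1,1,2,1,1,1,2,1], [1,2,2,1,1,1,1,1], [2,1,1,1,1,1,2,1], [2,2,1,1,1,1,1,1]]),
    ([1,1,2,1,1,2,1,1], [[1,1,2,1,1,2,1,1], [1,2,2,1,1,1,1,1], [2,1,1,1,1,2,1,1], [2,2,1,1,1,1,1,1]]),
    ([1,1,2,1,2,1,1,1], [[1,1,2,1,2,1,1,1], [1,2,2,1,1,1,1,1], [2,1,1,1,2,1,1,1], [2,2,1,1,1,1,1,1]]),
    ([1,1,2,2,1,1,1,1], [[1,1,2,2,1,1,1,1], [1,2,2,1,1,1,1,1], [2,1,1,2,1,1,1,1], [2,2,1,1,1,1,1,1]]),
    ([1,2,1,1,1,1,1,2], [[1,2,1,1,1,1,1,2], [1,2,2,1,1,1,1,1], [2,1,1,1,1,1,1,2], [2,1,2,1,1,1,1,1]]),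
    ([1,2,1,1,1,1,2,1], [[1,2,1,1,1,1,2,1], [1,2,2,1,1,1,1,1], [2,1,1,1,1,1,2,1], [2,1,2,1,1,1,1,1]]),
    ([1,2,1,1,1,2,1,1], [[1,2,1,1,1,2,1,1], [1,2,2,1,1,1,1,1], [2,1,1,1,1,2,1,1], [2,1,2,1,1,1,1,1]]),
    ([1,2,1,1,2,1,1,1], [[1,2,1,1,2,1,1,1], [1,2,2,1,1,1,1,1], [2,1,1,1,2,1,1,1], [2,1,2,1,1,1,1,1]]),
    ([1,2,1,2,1,1,1,1], [[1,2,1,2,1,1,1,1], [1,2,2,1,1,1,1,1], [2,1,1,2,1,1,1,1], [2,1,2,1,1,1,1,1]])]"

definition relations_8_62 :: "relation list" where
  "relations_8_62 = [([1,2,2,1,1,1,1,1], [(2, [1,1,1,1,1,1,1,1]), (1, [1,1,1,1,1,1,1,2]), (1, [1,1,1,1,1,1,2,1]), (1, [1,1,1,1,1,2,1,1]), (1, [1,1,1,1,2,1,1,1]), (1, [1,1,1,2,1,1,1,1]), (1, [1,1,2,1,1,1,1,1]), (1, [1,2,1,1,1,1,1,1])], [], [[1,1,1,1,1,1,2,2], [1,1,1,1,1,2,1,2], [1,1,1,1,1,2,2,1], [1,1,1,1,2,1,1,2], [1,1,1,1,2,1,2,1], [1,1,1,1,2,2,1,1], [1,1,1,2,1,1,1,2], [1,1,1,2,1,1,2,1], [1,1,1,2,1,2,1,1], [1,1,1,2,2,1,1,1], [1,1,2,1,1,1,1,2], [1,1,2,1,1,1,2,1], [1,1,2,1,1,2,1,1],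 [1,1,2,1,2,1,1,1], [1,1,2,2,1,1,1,1], [1,2,1,1,1,1,1,2], [1,2,1,1,1,1,2,1], [1,2,1,1,1,2,1,1], [1,2,1,1,2,1,1,1], [1,2,1,2,1,1,1,1]]),
    ([2,1,1,1,1,1,1,2], [(1, [1,1,1,1,1,1,1,2])], [], [[1,1,1,1,1,1,2,2], [1,1,1,1,1,2,1,2], [1,1,1,1,2,1,1,2], [1,1,1,2,1,1,1,2], [1,1,2,1,1,1,1,2], [1,2,1,1,1,1,1,2]]),
    ([2,1,1,1,1,1,2,1], [(1, [1,1,1,1,1,1,2,1])], [], [[1,1,1,1,1,1,2,2], [1,1,1,1,1,2,2,1], [1,1,1,1,2,1,2,1], [1,1,1,2,1,1,2,1], [1,1,2,1,1,1,2,1], [1,2,1,1,1,1,2,1]]),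
    ([2,1,1,1,1,2,1,1], [(1, [1,1,1,1,1,2,1,1])], [], [[1,1,1,1,1,2,1,2], [1,1,1,1,1,2,2,1], [1,1,1,1,2,2,1,1], [1,1,1,2,1,2,1,1], [1,1,2,1,1,2,1,1], [1,2,1,1,1,2,1,1]]),
    ([2,1,1,1,2,1,1,1], [(1, [1,1,1,1,2,1,1,1])], [], [[1,1,1,1,2,1,1,2], [1,1,1,1,2,1,2,1], [1,1,1,1,2,2,1,1], [1,1,1,2,2,1,1,1], [1,1,2,1,2,1,1,1], [1,2,1,1,2,1,1,1]]),
    ([2,1,1,2,1,1,1,1], [(1, [1,1,1,2,1,1,1,1])], [], [[1,1,1,2,1,1,1,2], [1,1,1,2,1,1,2,1], [1,1,1,2,1,2,1,1], [1,1,1,2,2,1,1,1], [1,1,2,2,1,1,1,1], [1,2,1,2,1,1,1,1]]),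
    ([2,1,2,1,1,1,1,1], [(2, [1,1,1,1,1,1,1,1]), (1, [1,1,1,1,1,1,1,2]), (1, [1,1,1,1,1,1,2,1]), (1, [1,1,1,1,1,2,1,1]), (1, [1,1,1,1,2,1,1,1]), (1, [1,1,1,2,1,1,1,1]), (1, [1,2,1,1,1,1,1,1])], [], [[1,1,1,1,1,1,2,2], [1,1,1,1,1,2,1,2], [1,1,1,1,1,2,2,1], [1,1,1,1,2,1,1,2], [1,1,1,1,2,1,2,1], [1,1,1,1,2,2,1,1], [1,1,1,2,1,1,1,2], [1,1,1,2,1,1,2,1], [1,1,1,2,1,2,1,1], [1,1,1,2,2,1,1,1], [1,2,1,1,1,1,1,2], [1,2,1,1,1,1,2,1], [1,2,1,1,1,2,1,1], [1,2,1,1,2,1,1,1], [1,2,1,2,1,1,1,1]]),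
    ([2,2,1,1,1,1,1,1], [(2, [1,1,1,1,1,1,1,1]), (1, [1,1,1,1,1,1,1,2]), (1, [1,1,1,1,1,1,2,1]), (1, [1,1,1,1,1,2,1,1]), (1, [1,1,1,1,2,1,1,1]), (1, [1,1,1,2,1,1,1,1]), (1, [1,1,2,1,1,1,1,1])], [], [[1,1,1,1,1,1,2,2], [1,1,1,1,1,2,1,2], [1,1,1,1,1,2,2,1], [1,1,1,1,2,1,1,2], [1,1,1,1,2,1,2,1], [1,1,1,1,2,2,1,1], [1,1,1,2,1,1,1,2], [1,1,1,2,1,1,2,1], [1,1,1,2,1,2,1,1], [1,1,1,2,2,1,1,1], [1,1,2,1,1,1,1,2], [1,1,2,1,1,1,2,1], [1,1,2,1,1,2,1,1], [1,1,2,1,2,1,1,1], [1,1,2,2,1,1,1,1]])]"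

lemma QPdim_7_10_4_3: "QPdim 7 10 [4,3] = 20"
proof -
  have "certificate_ok 7 10 [4,3] duals_7_43 relations_7_43" by code_simp
  from QPdim_certified[OF this] show ?thesis by (simp add: duals_7_43_def)
qed

lemma QPdim_7_10_6_2: "QPdim 7 10 [6,2] = 35"
proof -
  have "certificate_ok 7 10 [6,2] duals_7_62 relations_7_62" by code_simp
  from QPdim_certified[OF this] show ?thesis by (simp add: duals_7_62_def)
qed

lemma QPdim_8_10_6_2: "QPdim 8 10 [6,2] = 20"
proof -
  have "certificate_ok 8 10 [6,2] duals_8_62 relations_8_62" by code_simp
  from QPdim_certified[OF this] show ?thesis by (simp add: duals_8_62_def)
qed

theorem mainTheorem8:
  shows "QPdim 7 10 [2,2,1] = 0 \<and> QPdim 7 10 [2,4] = 0 \<and> QPdim 7 10 [4,1,1] = 0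
       \<and> QPdim 7 10 [4,3] = 20 \<and> QPdim 7 10 [6,2] = 35
       \<and> QPdim 8 10 [2,2,1] = 0 \<and> QPdim 8 10 [2,4] = 0 \<and> QPdim 8 10 [4,1,1] = 0
       \<and> QPdim 8 10 [4,3] = 0 \<and> QPdim 8 10 [6,2] = 20
       \<and> (\<forall>h\<ge>9. QPdim h 10 [2,2,1] = 0 \<and> QPdim h 10 [2,4] = 0 \<and> QPdim h 10 [4,1,1] = 0
                 \<and> QPdim h 10 [4,3] = 0 \<and> QPdim h 10 [6,2] = 0)"
  using QPdim_10_eq_0 QPdim_7_10_4_3 QPdim_7_10_6_2 QPdim_8_10_6_2
  by (simp add: QPdim_eq_0_if_many_variables wvec_def)

end
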